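(* Let $k,\ell\ge1$, $\delta\in(0,1)$. Let $T^{hh}_{k,\ell}$ be the tree obtained from disjoint stars $S_k$ (hub $h_k$, leaves including $a$) and $S_\ell$ (hub $h_\ell$, leaves including $b$) by adding the edge $\{h_k,h_\ell\}$, with $\mathcal H$ its edge set and vertex set $V$. Let $S_m$, $m=k+\ell+1$, be a star with hub $h_m$, leaf $c$, $\mathcal H$ its edge set. Then the bargaining-power components (computed on the whole vertex sets) are $$b^{h_k}_{h_\ell}=\delta+\tfrac23(k+\ell)\delta^2+\tfrac{k\ell}{2}\delta^3\ \text{in }T^{hh}_{k,\ell},\qquad b^{h_m}_{c}=\delta+\tfrac23(k+\ell)\delta^2\ \text{in }S_m,$$ $$b^{h_k}_{a}=\delta+\tfrac{2k}{3}\delta^2+\tfrac{\ell}{2}\delta^3\ \text{in }T^{hh}_{k,\ell},\qquad b^{a}_{b}=\tfrac12\delta^3\ \text{in }T^{hh}_{k,\ell}.$$ In particular $b^{h_k}_{h_\ell}>b^{h_m}_c$, and $b^a_b<b^{h_k}_a$, $b^a_b<b^{h_k}_{h_\ell}$; so in private two-person conferences (no witnesses, $b_{\mathrm{eff}}=b^S_R$) the leaf–leaf conversation $\{a,b\}$ has weakly the most equilibrium partitions.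
   Context: For a finite simple undirected graph $G=(V,E)$ and $\delta\in(0,1)$: $v^G(S):=\sum_{i\in S}\sum_{j\in S,\,j\neq i}\delta^{t_{ij}(G[S])}$ for $S\subseteq V$, where $t_{ij}(G[S])$ is the distance in the induced subgraph ($\infty$ if disconnected, $\delta^\infty:=0$). For a conference structure $\mathcal H$ and $C\subseteq V$, $C/\mathcal H$ is the partition of $C$ into classes connected via chains of pairwise-intersecting members of $\mathcal H$ contained in $C$; $r^{v^G}_{\mathcal H}(C):=\sum_{B\in C/\mathcal H}v^G(B)$; for $X\subseteq V$, $\mathcal H|_X:=\{H\in\mathcal H:H\subseteq X\}$. $\mu_j(X;u)$ denotes the Shapley value of player $j$ in the TU game $u$ on player set $X$. Bargaining-power components: $b^j_i:=\mu_j(V;r^{v^G}_{\mathcal H})-\mu_j(V\setminus\{i\};r^{v^G}_{\mathcal H|_{V\setminus\{i\}}})$. For $b>0$, $N(b)$ denotes the unique integer $N\ge1$ with $\beta(N)\le b<\beta(N-1)$, where $\beta(N)=\frac1{2N(N+1)}$ and $\beta(0)=+\infty$; $N$ is non-increasing in $b$. *)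

theory Defs
  imports Complex_Main
begin

definition is_path :: "nat set set \<Rightarrow> nat set \<Rightarrow> nat list \<Rightarrow> nat \<Rightarrow> nat \<Rightarrow> nat \<Rightarrow> bool" where
  "is_path E S xs i j n \<longleftrightarrow> length xs = Suc n \<and> hd xs = i \<and> last xs = j \<and> set xs \<subseteq> S
     \<and> (\<forall>t<n. {xs ! t, xs ! Suc t} \<in> E)"

definition connected_in :: "nat set set \<Rightarrow> nat set \<Rightarrow> nat \<Rightarrow> nat \<Rightarrow> bool" where
  "connected_in E S i j \<longleftrightarrow> (\<exists>xs n. is_path E S xs i j n)"

definition dist_in :: "nat set set \<Rightarrow> nat set \<Rightarrow> nat \<Rightarrow> nat \<Rightarrow> nat" where
  "dist_in E S i j = (LEAST n. \<exists>xs. is_path E S xs i j n)"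

definition dpow :: "real \<Rightarrow> nat set set \<Rightarrow> nat set \<Rightarrow> nat \<Rightarrow> nat \<Rightarrow> real" where
  "dpow \<delta> E S i j = (if connected_in E S i j then \<delta> ^ dist_in E S i j else 0)"

definition vG :: "real \<Rightarrow> nat set set \<Rightarrow> nat set \<Rightarrow> real" where
  "vG \<delta> E S = (\<Sum>i\<in>S. \<Sum>j\<in>S - {i}. dpow \<delta> E S i j)"

(* C/H: classes of C connected via chains of pairwise intersecting members of H contained in C *)
definition conf_rel :: "nat set set \<Rightarrow> nat set \<Rightarrow> (nat \<times> nat) set" where
  "conf_rel H C = (Id_on C \<union> {(x, y). \<exists>h\<in>H. h \<subseteq> C \<and> x \<in> h \<and> y \<in> h})\<^sup>*"

definition conf_partition :: "nat set set \<Rightarrow> nat set \<Rightarrow> nat set set" where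
  "conf_partition H C = C // conf_rel H C"

definition rH :: "real \<Rightarrow> nat set set \<Rightarrow> nat set set \<Rightarrow> nat set \<Rightarrow> real" where
  "rH \<delta> E H C = (\<Sum>B\<in>conf_partition H C. vG \<delta> E B)"

definition restrict_conf :: "nat set set \<Rightarrow> nat set \<Rightarrow> nat set set" where
  "restrict_conf H X = {h \<in> H. h \<subseteq> X}"

definition shapley :: "nat set \<Rightarrow> (nat set \<Rightarrow> real) \<Rightarrow> nat \<Rightarrow> real" where
  "shapley X u j = (\<Sum>S\<in>Pow (X - {j}).
      (fact (card S) * fact (card X - card S - 1) / fact (card X)) * (u (insert j S) - u S))"

definition bpower :: "real \<Rightarrow> nat set set \<Rightarrow> nat set set \<Rightarrow> nat set \<Rightarrow> nat \<Rightarrow> nat \<Rightarrow> real" where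
  "bpower \<delta> E H V j i =
     shapley V (rH \<delta> E H) j - shapley (V - {i}) (rH \<delta> E (restrict_conf H (V - {i}))) j"

(* T^{hh}_{k,l}: hub h_k = 0, hub h_l = 1, leaves of S_k are 2..k+1, leaves of S_l are k+2..k+l+1 *)
definition treeV :: "nat \<Rightarrow> nat \<Rightarrow> nat set" where
  "treeV k l = {0..<k + l + 2}"

definition treeE :: "nat \<Rightarrow> nat \<Rightarrow> nat set set" where
  "treeE k l = {{0, 1}} \<union> {{0, i} | i. i \<in> {2..<k + 2}} \<union> {{1, i} | i. i \<in> {k + 2..<k + l + 2}}"

definition starV :: "nat \<Rightarrow> nat set" where
  "starV m = {0..m}"

definition starE :: "nat \<Rightarrow> nat set set" where
  "starE m = {{0, i} | i. i \<in> {1..m}}"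

definition beta :: "nat \<Rightarrow> real" where
  "beta N = 1 / (2 * real N * (real N + 1))"

definition Nb :: "real \<Rightarrow> nat" where
  "Nb b = (THE N. N \<ge> 1 \<and> beta N \<le> b \<and> (N = 1 \<or> b < beta (N - 1)))"

end

(*
  In both graphs every vertex x has a hub h x (itself, if x is a hub), and for x \<noteq> y every
  x-y walk visits P(x, y) = {x, h x, h y, y}, while P(x, y) itself carries such a walk of length
  |P(x, y)| - 1. Hence \<delta>^t_xy(G[S]) = \<delta>^(|P(x, y)| - 1) if P(x, y) \<subseteq> S and 0 otherwise, so
  v^G is a positive combination of the unanimity games of the sets P(x, y); since the
  conference structure is the edge set, r^v^G_H = v^G. Removing player i deletes exactly the
  games with i \<in> P(x, y), and a unanimity game on T pays 1/|T| to each member of T, so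
  b^j_i is the sum of \<delta>^(|P| - 1) / |P| over the ordered pairs x \<noteq> y with i, j \<in> P(x, y).
  Counting these pairs gives the four formulas; the comparisons are elementary, and N is
  non-increasing.
*)

theory Submission
  imports Defs
begin

section \<open>Shapley values of unanimity games\<close>

lemma shapley_cong:
  assumes "j \<in> X" and "\<And>S. S \<subseteq> X \<Longrightarrow> u S = u' S"
  shows "shapley X u j = shapley X u' j"
proof -
  have "u (insert j S) = u' (insert j S)" and "u S = u' S" if "S \<in> Pow (X - {j})" for S
    using that assms(1) by (auto intro!: assms(2))
  then show ?thesis unfolding shapley_def by (auto intro!: sum.cong)
qed

lemma shapley_sum: "shapley X (\<lambda>S. \<Sum>p\<in>I. u p S) j = (\<Sum>p\<in>I. shapley X (u p) j)"
  unfolding shapley_def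
  by (simp add: sum_subtractf[symmetric] sum_distrib_left sum.swap[of _ I])

lemma shapley_cmult: "shapley X (\<lambda>S. c * u S) j = c * shapley X u j"
  unfolding shapley_def by (simp add: sum_distrib_left algebra_simps)

definition unanimity :: "nat set \<Rightarrow> nat set \<Rightarrow> real" where
  "unanimity T S = (if T \<subseteq> S then 1 else 0)"

lemma sum_Pow_by_card:
  assumes "finite A"
  shows "(\<Sum>R\<in>Pow A. g (card R)) = (\<Sum>r\<le>card A. of_nat (card A choose r) * g r)"
proof -
  have "(\<Sum>R\<in>Pow A. g (card R)) = (\<Sum>r\<le>card A. \<Sum>R | R \<in> Pow A \<and> card R = r. g (card R))"
    by (rule sum.group[symmetric]) (use assms card_mono in auto)
  also have "\<dots> = (\<Sum>r\<le>card A. of_nat (card A choose r) * g r)"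
    using n_subsets[OF assms] by (intro sum.cong refl) simp
  finally show ?thesis .
qed

lemma shapley_weight_sum:
  "(\<Sum>r\<le>m. of_nat (m choose r) * (fact (s + r) * fact (m - r) / fact (Suc (s + m))))
     = (1 / Suc s :: real)"
proof -
  have "(\<Sum>r\<le>m. of_nat (m choose r) * (fact (s + r) * fact (m - r) / fact (Suc (s + m))))
      = (\<Sum>r\<le>m. fact m * fact s / fact (Suc (s + m)) * of_nat (s + r choose r) :: real)"
    by (intro sum.cong refl) (simp add: binomial_fact field_simps)
  also have "\<dots> = fact m * fact s / fact (Suc (s + m)) * of_nat (Suc (s + m) choose m)"
    unfolding sum_distrib_left[symmetric] of_nat_sum[symmetric] sum_choose_lower ..
  also have "of_nat (Suc (s + m) choose m) = (fact (Suc (s + m)) / (fact m * fact (Suc s)) :: real)"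
    using binomial_fact[of m "Suc (s + m)"] by (simp add: Suc_diff_le)
  also have "fact m * fact s / fact (Suc (s + m)) * (fact (Suc (s + m)) / (fact m * fact (Suc s)))
      = (fact s / fact (Suc s) :: real)"
    by (simp del: fact_Suc)
  also have "\<dots> = 1 / Suc s"
    by (simp only: fact_Suc of_nat_mult) simp
  finally show ?thesis .
qed

lemma shapley_unanimity:
  assumes "finite X" and "T \<subseteq> X" and "j \<in> X"
  shows "shapley X (unanimity T) j = (if j \<in> T then 1 / card T else 0)"
proof (cases "j \<in> T")
  case False
  then have "shapley X (unanimity T) j = 0"
    unfolding shapley_def unanimity_def by (intro sum.neutral) (auto simp: subset_insert)
  with False show ?thesis by simp
next
  case True
  define n t m where "n = card X" and "t = card T" and "m = card (X - T)"
  define w where "w s = (fact s * fact (n - s - 1) / fact n :: real)" for s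
  have finT: "finite T" using assms finite_subset by blast
  have "t \<noteq> 0" "n = t + m"
    using True finT assms unfolding t_def n_def m_def by (auto simp: card_Diff_subset card_mono)
  then obtain s where t: "t = Suc s" "n = Suc (s + m)"
    using not0_implies_Suc by auto
  have card_split: "card S = t - 1 + card (S - T)" if "S \<subseteq> X - {j}" "T - {j} \<subseteq> S" for S
  proof -
    have "S = (T - {j}) \<union> (S - T)" using that by auto
    moreover have "finite S" using that assms(1) finite_subset by blast
    ultimately have "card S = card (T - {j}) + card (S - T)"
      by (metis Diff_disjoint Int_Diff card_Un_disjoint finite_Un inf_commute)
    then show ?thesis using finT True by (simp add: t_def)
  qed
  have "shapley X (unanimity T) j = (\<Sum>S\<in>Pow (X - {j}). if T - {j} \<subseteq> S then w (card S) else 0)"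
    unfolding shapley_def unanimity_def w_def n_def using True by (intro sum.cong refl) auto
  also have "\<dots> = (\<Sum>S | S \<subseteq> X - {j} \<and> T - {j} \<subseteq> S. w (card S))"
    using assms(1) by (simp add: sum.inter_filter[symmetric] Pow_def)
  also have "\<dots> = (\<Sum>R\<in>Pow (X - T). w (t - 1 + card R))"
    by (rule sum.reindex_bij_witness[of _ "\<lambda>R. (T - {j}) \<union> R" "\<lambda>S. S - T"])
      (use True assms finT card_split in \<open>auto simp: t_def card_Un_disjoint\<close>)
  also have "\<dots> = (\<Sum>r\<le>m. of_nat (m choose r) * w (t - 1 + r))"
    using sum_Pow_by_card[of "X - T"] assms(1) unfolding m_def by simp
  also have "\<dots> = 1 / t"
    using shapley_weight_sum[of m s] t unfolding w_def by simp
  finally show ?thesis using True t_def by simp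
qed

section \<open>Conference classes and induced distances\<close>

lemma is_path_mono: "is_path E S xs x y n \<Longrightarrow> S \<subseteq> S' \<Longrightarrow> is_path E S' xs x y n"
  unfolding is_path_def by auto

lemma is_path_ends:
  assumes "is_path E S xs x y n"
  shows "xs ! 0 = x" and "xs ! n = y"
  using assms unfolding is_path_def
  by (metis hd_conv_nth list.size(3) nat.distinct(1),
      metis diff_Suc_1 last_conv_nth list.size(3) nat.distinct(1))

lemma is_path_snoc:
  assumes "is_path E S xs x y n" and "{y, z} \<in> E" and "z \<in> S"
  shows "is_path E S (xs @ [z]) x z (Suc n)"
proof -
  have "xs ! n = y" "length xs = Suc n" "xs \<noteq> []"
    using assms(1) is_path_ends[OF assms(1)] unfolding is_path_def by auto
  then show ?thesis
    using assms unfolding is_path_def by (auto simp: nth_append less_Suc_eq)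
qed

lemma simple_path_extend:
  assumes "is_path E S xs x w (card (set xs) - 1)" and "w' \<in> S"
    and "w' = w \<or> {w, w'} \<in> E \<and> w' \<notin> set xs"
  shows "\<exists>ys. set ys = insert w' (set xs) \<and> is_path E S ys x w' (card (set ys) - 1)"
  using assms(3)
proof
  assume "w' = w"
  moreover have "w \<in> set xs"
    using assms(1) unfolding is_path_def by (metis last_in_set list.size(3) nat.distinct(1))
  ultimately show ?thesis using assms(1) by (metis insert_absorb)
next
  assume new: "{w, w'} \<in> E \<and> w' \<notin> set xs"
  have "set xs \<noteq> {}" using assms(1) unfolding is_path_def by auto
  then have "Suc (card (set xs) - 1) = card (set (xs @ [w'])) - 1"
    using new by (simp add: card_gt_0_iff)
  then show ?thesis
    using is_path_snoc[OF assms(1)] new assms(2)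
    by (metis set_append set_simps empty_set Un_insert_right sup_bot_right)
qed

lemma dpow_notin:
  assumes "z \<notin> S"
  shows "dpow \<delta> E S y z = 0"
proof -
  have "\<not> connected_in E S y z"
    using assms unfolding connected_in_def is_path_def
    by (metis Zero_not_Suc last_in_set list.size(3) subsetD)
  then show ?thesis by (simp add: dpow_def)
qed

lemma conf_rel_closed: "(x, y) \<in> conf_rel H C \<Longrightarrow> x \<in> C \<Longrightarrow> y \<in> C"
  unfolding conf_rel_def by (induction rule: rtrancl_induct) auto

lemma equiv_conf_rel: "equiv C (conf_rel H C \<inter> C \<times> C)"
proof (rule equivI)
  have "sym (Id_on C \<union> {(x, y). \<exists>h\<in>H. h \<subseteq> C \<and> x \<in> h \<and> y \<in> h})"
    by (auto simp: sym_def)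
  then show "sym (conf_rel H C \<inter> C \<times> C)"
    unfolding conf_rel_def by (intro sym_Int sym_rtrancl) (auto simp: sym_def)
  show "trans (conf_rel H C \<inter> C \<times> C)"
    unfolding conf_rel_def by (intro trans_Int trans_rtrancl) (auto simp: trans_def)
qed (auto simp: refl_on_def conf_rel_def)

lemma conf_partition_quotient: "conf_partition H C = C // (conf_rel H C \<inter> C \<times> C)"
  unfolding conf_partition_def quotient_def using conf_rel_closed by blast

lemma is_path_conf_class:
  assumes "is_path E S xs y z n"
  shows "set xs \<subseteq> conf_rel E S `` {y}"
proof -
  have "(y, xs ! t) \<in> conf_rel E S" if "t \<le> n" for t
    using that
  proof (induction t)
    case 0
    then show ?case using is_path_ends(1)[OF assms] unfolding conf_rel_def by simp
  next
    case (Suc t)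
    have "{xs ! t, xs ! Suc t} \<in> E" "{xs ! t, xs ! Suc t} \<subseteq> S"
      using assms Suc.prems unfolding is_path_def by (auto dest: nth_mem)
    then have "(xs ! t, xs ! Suc t) \<in> conf_rel E S"
      unfolding conf_rel_def by blast
    with Suc show ?case unfolding conf_rel_def by (auto dest: rtrancl_trans)
  qed
  then show ?thesis
    using assms unfolding is_path_def by (auto simp: in_set_conv_nth less_Suc_eq_le)
qed

lemma dpow_conf_class:
  assumes "y \<in> S"
  shows "dpow \<delta> E S y z = dpow \<delta> E (conf_rel E S `` {y}) y z"
proof -
  have "conf_rel E S `` {y} \<subseteq> S" using assms conf_rel_closed by blast
  then have paths: "is_path E S xs y z n \<longleftrightarrow> is_path E (conf_rel E S `` {y}) xs y z n" for xs n
    using is_path_conf_class[of E S xs y z n] is_path_mono[of E _ xs y z n]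
    unfolding is_path_def by blast
  show ?thesis unfolding dpow_def connected_in_def dist_in_def paths ..
qed

lemma sum_quotient:
  assumes "finite A" and "equiv A r"
  shows "sum f A = (\<Sum>X\<in>A // r. sum f X)"
proof -
  have "\<forall>X\<in>A // r. finite X"
    using finite_equiv_class[OF assms(1) equiv_type[OF assms(2)]] by blast
  moreover have "\<forall>X\<in>A // r. \<forall>Y\<in>A // r. X \<noteq> Y \<longrightarrow> X \<inter> Y = {}"
    using quotient_disj[OF assms(2)] by blast
  ultimately show ?thesis
    using sum.Union_disjoint[of "A // r" f] Union_quotient[OF assms(2)] by simp
qed

text \<open>The classes of \<open>S / E\<close> are the components of \<open>G[S]\<close>, and a walk in \<open>G[S]\<close> never
  leaves the component it starts in.\<close>

lemma rH_edges_eq_vG: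
  assumes "finite S"
  shows "rH \<delta> E E S = vG \<delta> E S"
proof -
  let ?r = "conf_rel E S \<inter> S \<times> S"
  have in_class: "B = conf_rel E S `` {y}" if B: "B \<in> S // ?r" and y: "y \<in> B" for B y
  proof -
    obtain x where "B = ?r `` {x}" "x \<in> S" using B by (rule quotientE)
    then have "B = ?r `` {y}" "y \<in> S"
      using y equiv_class_eq[OF equiv_conf_rel] by blast+
    then show ?thesis using conf_rel_closed by blast
  qed
  have "vG \<delta> E S = (\<Sum>B\<in>S // ?r. \<Sum>y\<in>B. \<Sum>z\<in>S - {y}. dpow \<delta> E S y z)"
    unfolding vG_def using sum_quotient[OF assms equiv_conf_rel] .
  also have "\<dots> = (\<Sum>B\<in>S // ?r. vG \<delta> E B)"
    unfolding vG_def
  proof (rule sum.cong[OF refl], rule sum.cong[OF refl])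
    fix B y assume B: "B \<in> S // ?r" and y: "y \<in> B"
    have "B \<subseteq> S" using B in_quotient_imp_subset equiv_conf_rel by blast
    then have "(\<Sum>z\<in>S - {y}. dpow \<delta> E B y z) = (\<Sum>z\<in>B - {y}. dpow \<delta> E B y z)"
      using assms by (intro sum.mono_neutral_right) (auto, metis dpow_notin)
    then show "(\<Sum>z\<in>S - {y}. dpow \<delta> E S y z) = (\<Sum>z\<in>B - {y}. dpow \<delta> E B y z)"
      using dpow_conf_class[of y S] in_class[OF B y] \<open>B \<subseteq> S\<close> y by auto
  qed
  finally show ?thesis unfolding rH_def conf_partition_quotient by simp
qed

lemma rH_restrict_conf:
  assumes "S \<subseteq> X"
  shows "rH \<delta> E (restrict_conf H X) S = rH \<delta> E H S"
proof -
  have "{(x, y). \<exists>h\<in>restrict_conf H X. h \<subseteq> S \<and> x \<in> h \<and> y \<in> h}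
      = {(x, y). \<exists>h\<in>H. h \<subseteq> S \<and> x \<in> h \<and> y \<in> h}"
    unfolding restrict_conf_def using assms by blast
  then have "conf_rel (restrict_conf H X) S = conf_rel H S"
    unfolding conf_rel_def by simp
  then show ?thesis unfolding rH_def conf_partition_def by simp
qed

section \<open>Graphs in which every vertex hangs on a hub\<close>

definition hub_path :: "(nat \<Rightarrow> nat) \<Rightarrow> nat \<Rightarrow> nat \<Rightarrow> nat set" where
  "hub_path h x y = {x, h x, h y, y}"

definition pair_share :: "real \<Rightarrow> nat \<Rightarrow> nat \<Rightarrow> nat set \<Rightarrow> real" where
  "pair_share \<delta> i j T = (if i \<in> T \<and> j \<in> T then \<delta> ^ (card T - 1) / card T else 0)"

lemma hub_path_commute: "hub_path h x y = hub_path h y x"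
  unfolding hub_path_def by auto

locale hub_graph =
  fixes V :: "nat set" and E :: "nat set set" and h :: "nat \<Rightarrow> nat"
  assumes finite_V: "finite V"
    and hub_in_V: "x \<in> V \<Longrightarrow> h x \<in> V"
    and hub_idem: "x \<in> V \<Longrightarrow> h (h x) = h x"
    and edge_iff: "{p, q} \<in> E \<longleftrightarrow>
      p \<noteq> q \<and> p \<in> V \<and> q \<in> V \<and> (q = h p \<or> p = h q \<or> h p = p \<and> h q = q)"
begin

lemma leaf_edge: "x \<in> V \<Longrightarrow> h x \<noteq> x \<Longrightarrow> {x, h x} \<in> E"
  using edge_iff hub_in_V by auto

lemma hub_edge: "x \<in> V \<Longrightarrow> y \<in> V \<Longrightarrow> h x \<noteq> h y \<Longrightarrow> {h x, h y} \<in> E"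
  using edge_iff hub_in_V hub_idem by auto

lemma leaf_neighbour: "{x, z} \<in> E \<Longrightarrow> h x \<noteq> x \<Longrightarrow> z = h x"
  using edge_iff hub_idem by metis

lemma hub_path_subset_path:
  assumes "is_path E S xs x y n" and "x \<noteq> y"
  shows "hub_path h x y \<subseteq> set xs"
proof -
  have len: "length xs = Suc n" and ends: "xs ! 0 = x" "xs ! n = y"
    and steps: "\<And>t. t < n \<Longrightarrow> {xs ! t, xs ! Suc t} \<in> E"
    using is_path_ends[OF assms(1)] assms(1) unfolding is_path_def by auto
  then have "n \<noteq> 0" using assms(2) by (metis gr0I)
  have "h x \<in> set xs"
  proof (cases "h x = x")
    case False
    then have "xs ! 1 = h x" using leaf_neighbour steps[of 0] ends \<open>n \<noteq> 0\<close> by simp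
    then show ?thesis using len \<open>n \<noteq> 0\<close> by (metis Suc_mono gr0I nth_mem One_nat_def)
  qed (use ends len in \<open>auto dest: nth_mem\<close>)
  moreover have "h y \<in> set xs"
  proof (cases "h y = y")
    case False
    then have "xs ! (n - 1) = h y"
      using leaf_neighbour steps[of "n - 1"] ends \<open>n \<noteq> 0\<close> by (simp add: insert_commute)
    then show ?thesis using len by (metis less_Suc_eq diff_le_self le_imp_less_Suc nth_mem)
  qed (use ends len in \<open>auto dest: nth_mem\<close>)
  ultimately show ?thesis
    using ends len unfolding hub_path_def by (auto dest: nth_mem)
qed

lemma hub_path_is_path:
  assumes "x \<in> V" and "y \<in> V" and "x \<noteq> y"
  shows "\<exists>xs. is_path E (hub_path h x y) xs x y (card (hub_path h x y) - 1)"
proof -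
  let ?P = "hub_path h x y"
  have in_P: "x \<in> ?P" "h x \<in> ?P" "h y \<in> ?P" "y \<in> ?P"
    unfolding hub_path_def by auto
  have "is_path E ?P [x] x x (card (set [x]) - 1)"
    using in_P unfolding is_path_def by simp
  moreover have "h x = x \<or> {x, h x} \<in> E \<and> h x \<notin> set [x]"
    using leaf_edge assms(1) by auto
  ultimately obtain xs1 where xs1: "set xs1 = {h x, x}"
    "is_path E ?P xs1 x (h x) (card (set xs1) - 1)"
    using simple_path_extend in_P by (metis empty_set list.simps(15))
  moreover have "h y = h x \<or> {h x, h y} \<in> E \<and> h y \<notin> set xs1"
    using hub_edge hub_idem assms(1,2) xs1(1) by auto
  ultimately obtain xs2 where xs2: "set xs2 = {h y, h x, x}"
    "is_path E ?P xs2 x (h y) (card (set xs2) - 1)"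
    using simple_path_extend in_P by metis
  moreover have "y = h y \<or> {h y, y} \<in> E \<and> y \<notin> set xs2"
    using leaf_edge[OF assms(2)] hub_idem assms xs2(1) by (auto simp: insert_commute)
  ultimately obtain xs3 where "set xs3 = {y, h y, h x, x}"
    "is_path E ?P xs3 x y (card (set xs3) - 1)"
    using simple_path_extend in_P by metis
  moreover have "{y, h y, h x, x} = ?P" unfolding hub_path_def by auto
  ultimately show ?thesis by auto
qed

lemma dpow_hub_path:
  assumes "x \<in> V" and "y \<in> V" and "x \<noteq> y"
  shows "dpow \<delta> E S x y = \<delta> ^ (card (hub_path h x y) - 1) * unanimity (hub_path h x y) S"
proof (cases "hub_path h x y \<subseteq> S")
  case True
  obtain xs where "is_path E S xs x y (card (hub_path h x y) - 1)"
    using hub_path_is_path[OF assms] is_path_mono True by blast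
  moreover have "card (hub_path h x y) - 1 \<le> n" if "is_path E S ys x y n" for ys n
  proof -
    have "card (hub_path h x y) \<le> card (set ys)"
      using hub_path_subset_path[OF that assms(3)] by (simp add: card_mono)
    also have "\<dots> \<le> Suc n" using that card_length unfolding is_path_def by metis
    finally show ?thesis by simp
  qed
  ultimately have "connected_in E S x y" and "dist_in E S x y = card (hub_path h x y) - 1"
    unfolding connected_in_def dist_in_def by (blast, blast intro: Least_equality)
  then show ?thesis using True unfolding dpow_def unanimity_def by simp
next
  case False
  then have "\<not> connected_in E S x y"
    using hub_path_subset_path[OF _ assms(3)] unfolding connected_in_def is_path_def by blast
  then show ?thesis using False unfolding dpow_def unanimity_def by simp
qed

lemma vG_hub_graph:
  assumes "S \<subseteq> V"
  shows "vG \<delta> E S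
    = (\<Sum>x\<in>V. \<Sum>y\<in>V - {x}. \<delta> ^ (card (hub_path h x y) - 1) * unanimity (hub_path h x y) S)"
proof -
  have outside: "unanimity (hub_path h x y) S = 0" if "x \<notin> S \<or> y \<notin> S" for x y
    using that unfolding unanimity_def hub_path_def by auto
  have "vG \<delta> E S
      = (\<Sum>x\<in>S. \<Sum>y\<in>S - {x}. \<delta> ^ (card (hub_path h x y) - 1) * unanimity (hub_path h x y) S)"
    unfolding vG_def using assms by (intro sum.cong refl dpow_hub_path) auto
  also have "\<dots> = (\<Sum>x\<in>S. \<Sum>y\<in>V - {x}. \<delta> ^ (card (hub_path h x y) - 1) * unanimity (hub_path h x y) S)"
    using assms finite_V outside by (intro sum.cong refl sum.mono_neutral_left) auto
  also have "\<dots> = (\<Sum>x\<in>V. \<Sum>y\<in>V - {x}. \<delta> ^ (card (hub_path h x y) - 1) * unanimity (hub_path h x y) S)"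
    using assms finite_V outside by (intro sum.mono_neutral_left) auto
  finally show ?thesis .
qed

lemma hub_path_subset: "x \<in> V \<Longrightarrow> y \<in> V \<Longrightarrow> hub_path h x y \<subseteq> V"
  unfolding hub_path_def using hub_in_V by auto

lemma shapley_hub_graph:
  assumes "X \<subseteq> V" and "j \<in> X"
  shows "shapley X (rH \<delta> E (restrict_conf E X)) j = (\<Sum>x\<in>V. \<Sum>y\<in>V - {x}.
    if hub_path h x y \<subseteq> X \<and> j \<in> hub_path h x y
    then \<delta> ^ (card (hub_path h x y) - 1) / card (hub_path h x y) else 0)"
proof -
  let ?P = "hub_path h"
  let ?c = "\<lambda>x y. if ?P x y \<subseteq> X then \<delta> ^ (card (?P x y) - 1) else 0"
  have "shapley X (rH \<delta> E (restrict_conf E X)) j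
      = shapley X (\<lambda>S. \<Sum>x\<in>V. \<Sum>y\<in>V - {x}. ?c x y * unanimity (?P x y) S) j"
  proof (rule shapley_cong[OF assms(2)])
    fix S assume S: "S \<subseteq> X"
    have "rH \<delta> E (restrict_conf E X) S
        = (\<Sum>x\<in>V. \<Sum>y\<in>V - {x}. \<delta> ^ (card (?P x y) - 1) * unanimity (?P x y) S)"
      using S assms(1) finite_subset[OF _ finite_V]
      by (simp add: rH_restrict_conf rH_edges_eq_vG vG_hub_graph)
    also have "\<dots> = (\<Sum>x\<in>V. \<Sum>y\<in>V - {x}. ?c x y * unanimity (?P x y) S)"
      using S unfolding unanimity_def by (intro sum.cong refl) auto
    finally show "rH \<delta> E (restrict_conf E X) S = \<dots>" .
  qed
  also have "\<dots> = (\<Sum>x\<in>V. \<Sum>y\<in>V - {x}.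
      if ?P x y \<subseteq> X \<and> j \<in> ?P x y then \<delta> ^ (card (?P x y) - 1) / card (?P x y) else 0)"
    unfolding shapley_sum shapley_cmult using assms finite_subset[OF _ finite_V]
    by (intro sum.cong refl) (auto simp: shapley_unanimity)
  finally show ?thesis .
qed

lemma bpower_hub_graph:
  assumes "i \<in> V" and "j \<in> V" and "j \<noteq> i"
  shows "bpower \<delta> E E V j i = (\<Sum>x\<in>V. \<Sum>y\<in>V - {x}. pair_share \<delta> i j (hub_path h x y))"
proof -
  let ?P = "hub_path h" and ?w = "\<lambda>T. \<delta> ^ (card T - 1) / card T"
  have "shapley V (rH \<delta> E E) j = shapley V (rH \<delta> E (restrict_conf E V)) j"
    using assms(2) by (intro shapley_cong) (simp_all add: rH_restrict_conf)
  then have "bpower \<delta> E E V j i = (\<Sum>x\<in>V. \<Sum>y\<in>V - {x}.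
      (if ?P x y \<subseteq> V \<and> j \<in> ?P x y then ?w (?P x y) else 0)
      - (if ?P x y \<subseteq> V - {i} \<and> j \<in> ?P x y then ?w (?P x y) else 0))"
    unfolding bpower_def using assms by (simp add: shapley_hub_graph sum_subtractf)
  also have "\<dots> = (\<Sum>x\<in>V. \<Sum>y\<in>V - {x}. pair_share \<delta> i j (?P x y))"
    using hub_path_subset by (intro sum.cong refl) (auto simp: pair_share_def)
  finally show ?thesis .
qed

end

section \<open>The double star and the star\<close>

lemma sum_offdiag_cut:
  fixes g :: "'a \<Rightarrow> 'a \<Rightarrow> real"
  assumes "finite V" and "L \<subseteq> V" and "R \<subseteq> V" and "L \<inter> R = {}"
    and sym: "\<And>x y. g x y = g y x"
    and cut: "\<And>x y. x \<in> V \<Longrightarrow> y \<in> V \<Longrightarrow> x \<noteq> y \<Longrightarrow> g x y \<noteq> 0 \<Longrightarrow>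
      x \<in> L \<and> y \<in> R \<or> x \<in> R \<and> y \<in> L"
  shows "(\<Sum>x\<in>V. \<Sum>y\<in>V - {x}. g x y) = 2 * (\<Sum>x\<in>L. \<Sum>y\<in>R. g x y)"
proof -
  have fin: "finite L" "finite R" using assms(1-3) finite_subset by auto
  have "(\<Sum>x\<in>V. \<Sum>y\<in>V - {x}. g x y) = (\<Sum>(x, y)\<in>Sigma V (\<lambda>x. V - {x}). g x y)"
    using assms(1) by (simp add: sum.Sigma)
  also have "\<dots> = (\<Sum>(x, y)\<in>L \<times> R \<union> R \<times> L. g x y)"
    using assms(1-4) by (intro sum.mono_neutral_right) (auto, (metis cut)+)
  also have "\<dots> = (\<Sum>(x, y)\<in>L \<times> R. g x y) + (\<Sum>(x, y)\<in>R \<times> L. g x y)"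
    using assms fin by (intro sum.union_disjoint) auto
  also have "(\<Sum>(x, y)\<in>R \<times> L. g x y) = (\<Sum>(x, y)\<in>L \<times> R. g x y)"
    using sym by (simp add: sum.cartesian_product[symmetric] sum.swap[of _ R])
  finally show ?thesis by (simp add: sum.cartesian_product)
qed

definition tree_hub :: "nat \<Rightarrow> nat \<Rightarrow> nat" where
  "tree_hub k x = (if x = 1 \<or> k + 2 \<le> x then 1 else 0)"

lemma hub_graph_tree: "hub_graph (treeV k l) (treeE k l) (tree_hub k)"
  by unfold_locales (auto simp: treeV_def treeE_def tree_hub_def doubleton_eq_iff)

lemma hub_graph_star: "hub_graph (starV m) (starE m) (\<lambda>_. 0)"
  by unfold_locales (auto simp: starV_def starE_def doubleton_eq_iff)

lemma leaf_in_tree_hub_path: "2 \<le> a \<Longrightarrow> a \<in> hub_path (tree_hub k) x y \<longleftrightarrow> a = x \<or> a = y"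
  unfolding hub_path_def tree_hub_def by auto

lemma bpower_tree_leaf_leaf:
  assumes "a \<in> {2..<k + 2}" and "b \<in> {k + 2..<k + l + 2}"
  shows "bpower \<delta> (treeE k l) (treeE k l) (treeV k l) a b = \<delta>^3 / 2"
proof -
  have "bpower \<delta> (treeE k l) (treeE k l) (treeV k l) a b
      = (\<Sum>x\<in>treeV k l. \<Sum>y\<in>treeV k l - {x}. pair_share \<delta> b a (hub_path (tree_hub k) x y))"
    using assms by (intro hub_graph.bpower_hub_graph[OF hub_graph_tree]) (auto simp: treeV_def)
  also have "\<dots> = 2 * (\<Sum>x\<in>{a}. \<Sum>y\<in>{b}. pair_share \<delta> b a (hub_path (tree_hub k) x y))"
    using assms by (intro sum_offdiag_cut hub_path_commute arg_cong[where f = "pair_share \<delta> b a"])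
      (auto simp: treeV_def pair_share_def leaf_in_tree_hub_path split: if_splits)
  also have "\<dots> = \<delta>^3 / 2"
    using assms by (simp add: pair_share_def hub_path_def tree_hub_def numeral_eq_Suc)
  finally show ?thesis .
qed

lemma sum_treeV_minus_leaf:
  assumes "a \<in> {2..<k + 2}"
  shows "(\<Sum>y\<in>treeV k l - {a}. f y)
    = f 0 + f 1 + (\<Sum>y\<in>{2..<k + 2} - {a}. f y) + (\<Sum>y\<in>{k + 2..<k + l + 2}. f y)"
proof -
  have "treeV k l - {a} = insert 0 (insert 1 (({2..<k + 2} - {a}) \<union> {k + 2..<k + l + 2}))"
    using assms unfolding treeV_def by auto
  moreover have "({2..<k + 2} - {a}) \<inter> {k + 2..<k + l + 2} = {}" by auto
  ultimately show ?thesis by (simp add: sum.union_disjoint add.assoc del: sum.op_ivl_Suc)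
qed

lemma bpower_tree_hub_leaf:
  assumes "a \<in> {2..<k + 2}"
  shows "bpower \<delta> (treeE k l) (treeE k l) (treeV k l) 0 a
    = \<delta> + 2 * real k / 3 * \<delta>^2 + real l / 2 * \<delta>^3"
proof -
  let ?g = "\<lambda>x y. pair_share \<delta> a 0 (hub_path (tree_hub k) x y)"
  have "bpower \<delta> (treeE k l) (treeE k l) (treeV k l) 0 a
      = (\<Sum>x\<in>treeV k l. \<Sum>y\<in>treeV k l - {x}. ?g x y)"
    using assms by (intro hub_graph.bpower_hub_graph[OF hub_graph_tree]) (auto simp: treeV_def)
  also have "\<dots> = 2 * (\<Sum>x\<in>{a}. \<Sum>y\<in>treeV k l - {a}. ?g x y)"
    using assms by (intro sum_offdiag_cut hub_path_commute arg_cong[where f = "pair_share \<delta> a 0"])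
      (auto simp: treeV_def pair_share_def leaf_in_tree_hub_path split: if_splits)
  also have "(\<Sum>x\<in>{a}. \<Sum>y\<in>treeV k l - {a}. ?g x y) = (\<Sum>y\<in>treeV k l - {a}. ?g a y)"
    by simp
  also have "\<dots> = \<delta> / 2 + \<delta>^2 / 3 + (\<Sum>y\<in>{2..<k + 2} - {a}. \<delta>^2 / 3)
      + (\<Sum>y\<in>{k + 2..<k + l + 2}. \<delta>^3 / 4)"
    unfolding sum_treeV_minus_leaf[OF assms] using assms
    by (intro arg_cong2[where f = "(+)"] sum.cong refl)
      (auto simp: pair_share_def hub_path_def tree_hub_def numeral_eq_Suc insert_commute)
  finally show ?thesis using assms by (simp add: of_nat_diff field_simps)
qed

lemma bpower_tree_hub_hub:
  "bpower \<delta> (treeE k l) (treeE k l) (treeV k l) 0 1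
    = \<delta> + 2 / 3 * real (k + l) * \<delta>^2 + real (k * l) / 2 * \<delta>^3"
proof -
  let ?g = "\<lambda>x y. pair_share \<delta> 1 0 (hub_path (tree_hub k) x y)"
  let ?A = "{2..<k + 2}" and ?B = "{k + 2..<k + l + 2}"
  have "bpower \<delta> (treeE k l) (treeE k l) (treeV k l) 0 1
      = (\<Sum>x\<in>treeV k l. \<Sum>y\<in>treeV k l - {x}. ?g x y)"
    by (intro hub_graph.bpower_hub_graph[OF hub_graph_tree]) (auto simp: treeV_def)
  also have "\<dots> = 2 * (\<Sum>x\<in>insert 0 ?A. \<Sum>y\<in>insert 1 ?B. ?g x y)"
    by (intro sum_offdiag_cut hub_path_commute arg_cong[where f = "pair_share \<delta> 1 0"])
      (auto simp: treeV_def pair_share_def hub_path_def tree_hub_def split: if_splits)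
  also have "(\<Sum>x\<in>insert 0 ?A. \<Sum>y\<in>insert 1 ?B. ?g x y)
      = (?g 0 1 + (\<Sum>y\<in>?B. ?g 0 y)) + (\<Sum>x\<in>?A. ?g x 1 + (\<Sum>y\<in>?B. ?g x y))"
    by (simp del: sum.op_ivl_Suc)
  also have "\<dots> = (\<delta> / 2 + (\<Sum>y\<in>?B. \<delta>^2 / 3)) + (\<Sum>x\<in>?A. \<delta>^2 / 3 + (\<Sum>y\<in>?B. \<delta>^3 / 4))"
    by (intro arg_cong2[where f = "(+)"] sum.cong refl)
      (auto simp: pair_share_def hub_path_def tree_hub_def numeral_eq_Suc insert_commute)
  finally show ?thesis by (simp add: field_simps)
qed

lemma leaf_in_star_hub_path: "a \<noteq> 0 \<Longrightarrow> a \<in> hub_path (\<lambda>_. 0) x y \<longleftrightarrow> a = x \<or> a = y"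
  unfolding hub_path_def by auto

lemma bpower_star_hub_leaf:
  assumes "c \<in> {1..m}"
  shows "bpower \<delta> (starE m) (starE m) (starV m) 0 c = \<delta> + 2 / 3 * real (m - 1) * \<delta>^2"
proof -
  let ?g = "\<lambda>x y. pair_share \<delta> c 0 (hub_path (\<lambda>_. 0) x y)"
  have "bpower \<delta> (starE m) (starE m) (starV m) 0 c = (\<Sum>x\<in>starV m. \<Sum>y\<in>starV m - {x}. ?g x y)"
    using assms by (intro hub_graph.bpower_hub_graph[OF hub_graph_star]) (auto simp: starV_def)
  also have "\<dots> = 2 * (\<Sum>x\<in>{c}. \<Sum>y\<in>starV m - {c}. ?g x y)"
    using assms by (intro sum_offdiag_cut hub_path_commute arg_cong[where f = "pair_share \<delta> c 0"])
      (auto simp: starV_def pair_share_def leaf_in_star_hub_path split: if_splits)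
  also have "(\<Sum>x\<in>{c}. \<Sum>y\<in>starV m - {c}. ?g x y) = ?g c 0 + (\<Sum>y\<in>{1..m} - {c}. ?g c y)"
  proof -
    have "starV m - {c} = insert 0 ({1..m} - {c})" using assms unfolding starV_def by auto
    then show ?thesis by simp
  qed
  also have "\<dots> = \<delta> / 2 + (\<Sum>y\<in>{1..m} - {c}. \<delta>^2 / 3)"
    using assms by (intro arg_cong2[where f = "(+)"] sum.cong refl)
      (auto simp: pair_share_def hub_path_def numeral_eq_Suc insert_commute)
  finally show ?thesis using assms by (simp add: field_simps)
qed

section \<open>The number \<open>N(b)\<close>\<close>

text \<open>Here \<open>beta 0 = 0\<close> (division by zero) instead of \<open>+\<infinity>\<close>, hence the hypothesis \<open>1 \<le> n\<close>.\<close>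

lemma beta_antimono:
  assumes "1 \<le> n" and "n \<le> m"
  shows "beta m \<le> beta n"
  unfolding beta_def using assms by (intro divide_left_mono mult_mono) auto

lemma Nb_unique:
  assumes "N \<ge> 1 \<and> beta N \<le> b \<and> (N = 1 \<or> b < beta (N - 1))"
    and "M \<ge> 1 \<and> beta M \<le> b \<and> (M = 1 \<or> b < beta (M - 1))"
  shows "N = M"
proof (rule ccontr)
  assume "N \<noteq> M"
  then consider "N < M" | "M < N" by linarith
  then show False
  proof cases
    case 1
    then have "beta (M - 1) \<le> beta N" using assms by (intro beta_antimono) auto
    then show False using 1 assms by auto
  next
    case 2
    then have "beta (N - 1) \<le> beta M" using assms by (intro beta_antimono) auto
    then show False using 2 assms by auto
  qed
qed

lemma beta_le_inverse:
  assumes "1 \<le> N"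
  shows "beta N \<le> 1 / N"
proof -
  have "real N * 1 \<le> real N * (2 * (real N + 1))" by (intro mult_left_mono) auto
  then show ?thesis unfolding beta_def using assms by (intro divide_left_mono) (auto simp: ac_simps)
qed

lemma Nb_exists:
  assumes "0 < b"
  shows "\<exists>N. N \<ge> 1 \<and> beta N \<le> b \<and> (N = 1 \<or> b < beta (N - 1))"
proof -
  let ?Q = "\<lambda>N. N \<ge> 1 \<and> beta N \<le> b"
  obtain n :: nat where "1 / b < n" using reals_Archimedean2 by blast
  then have "1 / real (Suc n) \<le> b"
    using assms by (simp add: field_simps)
  then have "?Q (Suc n)" using beta_le_inverse[of "Suc n"] by simp
  then have least: "?Q (LEAST N. ?Q N)" by (rule LeastI)
  have "b < beta ((LEAST N. ?Q N) - 1)" if "(LEAST N. ?Q N) \<noteq> 1"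
    using that least not_less_Least[of "(LEAST N. ?Q N) - 1" ?Q] by auto
  then show ?thesis using least by blast
qed

lemma Nb_spec:
  assumes "0 < b"
  shows "Nb b \<ge> 1 \<and> beta (Nb b) \<le> b \<and> (Nb b = 1 \<or> b < beta (Nb b - 1))"
proof -
  obtain N where N: "N \<ge> 1 \<and> beta N \<le> b \<and> (N = 1 \<or> b < beta (N - 1))"
    using Nb_exists[OF assms] by blast
  show ?thesis unfolding Nb_def
    by (rule theI[where P = "\<lambda>N. N \<ge> 1 \<and> beta N \<le> b \<and> (N = 1 \<or> b < beta (N - 1))", OF N])
      (rule Nb_unique[OF _ N])
qed

lemma Nb_antimono:
  assumes "0 < b'" and "b' \<le> b"
  shows "Nb b \<le> Nb b'"
proof (rule ccontr)
  assume "\<not> Nb b \<le> Nb b'"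
  then have "beta (Nb b - 1) \<le> beta (Nb b')"
    using Nb_spec[OF assms(1)] by (intro beta_antimono) auto
  then show False
    using Nb_spec[OF assms(1)] Nb_spec[of b] assms \<open>\<not> Nb b \<le> Nb b'\<close> by auto
qed

theorem mainTheorem10:
  fixes k l :: nat and \<delta> :: real and a b c :: nat
  assumes "k \<ge> 1" and "l \<ge> 1" and "0 < \<delta>" and "\<delta> < 1"
    and "a \<in> {2..<k + 2}" and "b \<in> {k + 2..<k + l + 2}" and "c \<in> {1..k + l + 1}"
  shows "bpower \<delta> (treeE k l) (treeE k l) (treeV k l) 0 1
           = \<delta> + 2 / 3 * real (k + l) * \<delta>^2 + real (k * l) / 2 * \<delta>^3
    \<and> bpower \<delta> (starE (k + l + 1)) (starE (k + l + 1)) (starV (k + l + 1)) 0 c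
           = \<delta> + 2 / 3 * real (k + l) * \<delta>^2
    \<and> bpower \<delta> (treeE k l) (treeE k l) (treeV k l) 0 a
           = \<delta> + 2 * real k / 3 * \<delta>^2 + real l / 2 * \<delta>^3
    \<and> bpower \<delta> (treeE k l) (treeE k l) (treeV k l) a b = \<delta>^3 / 2
    \<and> bpower \<delta> (treeE k l) (treeE k l) (treeV k l) 0 1
           > bpower \<delta> (starE (k + l + 1)) (starE (k + l + 1)) (starV (k + l + 1)) 0 c
    \<and> bpower \<delta> (treeE k l) (treeE k l) (treeV k l) a b
           < bpower \<delta> (treeE k l) (treeE k l) (treeV k l) 0 a
    \<and> bpower \<delta> (treeE k l) (treeE k l) (treeV k l) a b
           < bpower \<delta> (treeE k l) (treeE k l) (treeV k l) 0 1
    \<and> Nb (bpower \<delta> (treeE k l) (treeE k l) (treeV k l) a b)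
           \<ge> Nb (bpower \<delta> (treeE k l) (treeE k l) (treeV k l) 0 a)
    \<and> Nb (bpower \<delta> (treeE k l) (treeE k l) (treeV k l) a b)
           \<ge> Nb (bpower \<delta> (treeE k l) (treeE k l) (treeV k l) 0 1)"
proof -
  let ?T = "bpower \<delta> (treeE k l) (treeE k l) (treeV k l)"
  let ?S = "bpower \<delta> (starE (k + l + 1)) (starE (k + l + 1)) (starV (k + l + 1))"
  have star: "?S 0 c = \<delta> + 2 / 3 * real (k + l) * \<delta>^2"
    using bpower_star_hub_leaf[OF assms(7)] by simp
  note formulas = bpower_tree_hub_hub star bpower_tree_hub_leaf[OF assms(5)]
    bpower_tree_leaf_leaf[OF assms(5,6)]
  have "\<delta>^3 < \<delta>" using power_strict_decreasing_iff[of \<delta> 3 1] assms(3,4) by simp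
  moreover have "0 < \<delta>" "0 < real (k * l) / 2 * \<delta>^3" "0 \<le> 2 * real k / 3 * \<delta>^2"
    "0 \<le> real l / 2 * \<delta>^3" "0 \<le> 2 / 3 * real (k + l) * \<delta>^2"
    using assms by auto
  ultimately have less: "?S 0 c < ?T 0 1" "?T a b < ?T 0 a" "?T a b < ?T 0 1"
    unfolding formulas by linarith+
  have "0 < ?T a b" unfolding formulas using assms by simp
  then have "Nb (?T 0 a) \<le> Nb (?T a b)" and "Nb (?T 0 1) \<le> Nb (?T a b)"
    using Nb_antimono less(2,3) by simp_all
  then show ?thesis by (intro conjI formulas less)
qed

end
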